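(* Let $\ell\ge2$, $r_0,\dots,r_\ell\ge1$ integers, $d_0,\dots,d_\ell$ integers with $d_V=\sum_kd_k=0$, $\mathbf{g}\ge1$ an integer. For real $c>\max_k\mu_k$ let $(a_0,a_2,\dots,a_\ell)$ be the unique solution of the linear system in the context, and put $\Sigma_1(c)=\sum_{j=2}^\ell a_jr_j$, $\Sigma_2(c)=\sum_{j=2}^\ell a_jd_j$. Then, as $c\to+\infty$, $\Sigma_1$ and $\Sigma_2$ have expansions $\Sigma_1=\sum_{i\ge1}u_ic^{-i}$, $\Sigma_2=\sum_{i\ge1}v_ic^{-i}$, and with $\mu_{01}=\frac{d_0+d_1}{r_0+r_1}$ the coefficients satisfy $u_1=4r_V^2\mu_{01}$, $(r_V+2)u_2-2\mu_{01}u_1-2v_1=4(r_V+2)(\mathbf{g}-1)r_V\mu_{01}$, and for all $i\ge1$: $(r_V+2)u_{i+2}-2\mu_{01}u_{i+1}-2v_{i+1}+\frac{r_V+2}{r_V+1}\mu_{01}v_i=0$.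
   Context: $\mu_k=d_k/r_k$, $r_V=\sum_kr_k$, $\pi_R=\prod_k(r_k-1)!$. For $1\le j\ne k\le\ell$: $\alpha_0=\frac{\pi_R}{r_V!}(cr_V-d_V)$, $\alpha_j=\frac{\pi_R}{(r_V+1)!}r_j(c(r_V+1)-d_V-\mu_j)$, $\alpha_{jk}=\frac{\pi_R}{(r_V+2)!}r_jr_k(c(r_V+2)-d_V-\mu_j-\mu_k)$, $\alpha_{jj}=\frac{\pi_R}{(r_V+2)!}r_j(r_j+1)(c(r_V+2)-d_V-2\mu_j)$, $\beta_0=\frac{\pi_R}{(r_V-1)!}((r_V-1)r_Vc+2(1-\mathbf{g})-(r_V-1)d_V)$, $\beta_j=\frac{\pi_Rr_j}{r_V!}(r_V(r_V-1)c+2(1-\mathbf{g})-d_V(r_V-2)-r_V\mu_j)$. The linear system for $(a_0,a_2,\dots,a_\ell)$ is: $a_0\alpha_k+\sum_{j=2}^\ell a_j\alpha_{jk}=2\beta_k$ for $k=2,\dots,\ell$, and $a_0\alpha_0+\sum_{j=2}^\ell a_j\alpha_j=2\beta_0$. *)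

theory Defs
  imports Complex_Main
begin

definition mu :: "(nat \<Rightarrow> nat) \<Rightarrow> (nat \<Rightarrow> int) \<Rightarrow> nat \<Rightarrow> real" where
  "mu r d k = real_of_int (d k) / real (r k)"

definition rV :: "nat \<Rightarrow> (nat \<Rightarrow> nat) \<Rightarrow> nat" where
  "rV l r = (\<Sum>k\<le>l. r k)"

definition dV :: "nat \<Rightarrow> (nat \<Rightarrow> int) \<Rightarrow> int" where
  "dV l d = (\<Sum>k\<le>l. d k)"

definition piR :: "nat \<Rightarrow> (nat \<Rightarrow> nat) \<Rightarrow> real" where
  "piR l r = (\<Prod>k\<le>l. fact (r k - 1))"

definition alpha0 :: "nat \<Rightarrow> (nat \<Rightarrow> nat) \<Rightarrow> (nat \<Rightarrow> int) \<Rightarrow> real \<Rightarrow> real" where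
  "alpha0 l r d c = piR l r / fact (rV l r) * (c * real (rV l r) - real_of_int (dV l d))"

definition alpha1 :: "nat \<Rightarrow> (nat \<Rightarrow> nat) \<Rightarrow> (nat \<Rightarrow> int) \<Rightarrow> real \<Rightarrow> nat \<Rightarrow> real" where
  "alpha1 l r d c j = piR l r / fact (rV l r + 1) * real (r j) *
     (c * (real (rV l r) + 1) - real_of_int (dV l d) - mu r d j)"

definition alpha2 :: "nat \<Rightarrow> (nat \<Rightarrow> nat) \<Rightarrow> (nat \<Rightarrow> int) \<Rightarrow> real \<Rightarrow> nat \<Rightarrow> nat \<Rightarrow> real" where
  "alpha2 l r d c j k =
     (if j \<noteq> k then
        piR l r / fact (rV l r + 2) * real (r j) * real (r k) *
          (c * (real (rV l r) + 2) - real_of_int (dV l d) - mu r d j - mu r d k)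
      else
        piR l r / fact (rV l r + 2) * real (r j) * (real (r j) + 1) *
          (c * (real (rV l r) + 2) - real_of_int (dV l d) - 2 * mu r d j))"

definition beta0 :: "nat \<Rightarrow> (nat \<Rightarrow> nat) \<Rightarrow> (nat \<Rightarrow> int) \<Rightarrow> int \<Rightarrow> real \<Rightarrow> real" where
  "beta0 l r d g c = piR l r / fact (rV l r - 1) *
     ((real (rV l r) - 1) * real (rV l r) * c + 2 * (1 - real_of_int g)
      - (real (rV l r) - 1) * real_of_int (dV l d))"

definition beta1 :: "nat \<Rightarrow> (nat \<Rightarrow> nat) \<Rightarrow> (nat \<Rightarrow> int) \<Rightarrow> int \<Rightarrow> real \<Rightarrow> nat \<Rightarrow> real" where
  "beta1 l r d g c j = piR l r * real (r j) / fact (rV l r) *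
     (real (rV l r) * (real (rV l r) - 1) * c + 2 * (1 - real_of_int g)
      - real_of_int (dV l d) * (real (rV l r) - 2) - real (rV l r) * mu r d j)"

text \<open>\<open>a 0\<close> is \<open>a\<^sub>0\<close>, \<open>a j\<close> for \<open>j = 2..l\<close> are the other unknowns (\<open>a 1\<close> unused).\<close>
definition solves_system ::
  "nat \<Rightarrow> (nat \<Rightarrow> nat) \<Rightarrow> (nat \<Rightarrow> int) \<Rightarrow> int \<Rightarrow> real \<Rightarrow> (nat \<Rightarrow> real) \<Rightarrow> bool" where
  "solves_system l r d g c a \<longleftrightarrow>
     (\<forall>k\<in>{2..l}. a 0 * alpha1 l r d c k + (\<Sum>j=2..l. a j * alpha2 l r d c j k)
                   = 2 * beta1 l r d g c k) \<and>
     a 0 * alpha0 l r d c + (\<Sum>j=2..l. a j * alpha1 l r d c j) = 2 * beta0 l r d g c"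

end

theory Submission
  imports Defs "HOL-Analysis.Analysis"
begin

text \<open>
  Divide row \<open>k \<ge> 2\<close> of the system by its positive factor \<open>\<pi>\<^sub>R r\<^sub>k / (r\<^sub>V + 2)!\<close> and eliminate
  \<open>a\<^sub>0\<close> with row \<open>0\<close>: in terms of \<open>x = 1/c\<close>, every \<open>a\<^sub>k\<close> becomes a partial fraction
  \<open>(\<sigma>\<^sub>2 + \<sigma>\<^sub>3 / q\<^sub>k) / (2 r\<^sub>V (r\<^sub>V + 1))\<close> with \<open>q\<^sub>k = r\<^sub>V + 2 - 2 \<mu>\<^sub>k x\<close>, where \<open>\<sigma>\<^sub>2, \<sigma>\<^sub>3\<close> are affine
  in \<open>\<Sigma>\<^sub>1, \<Sigma>\<^sub>2\<close>. Summing against \<open>r\<^sub>k\<close> and \<open>d\<^sub>k\<close> yields a \<open>2 \<times> 2\<close> linear system for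
  \<open>(c \<Sigma>\<^sub>1, \<Sigma>\<^sub>2)\<close> whose coefficients are analytic at \<open>x = 0\<close>, with determinant \<open>-4 r\<^sub>V (r\<^sub>V + 1)\<^sup>2\<close>
  there. By Cramer's rule \<open>c \<Sigma>\<^sub>1\<close> and \<open>\<Sigma>\<^sub>2\<close> are power series in \<open>1/c\<close>, and \<open>\<Sigma>\<^sub>2\<close> has no constant
  term. One equation of the system has polynomial coefficients; comparing coefficients in it
  gives the stated relations.
\<close>

section \<open>Power series solutions of analytic linear systems\<close>

lemma fps_nth_0_has_fps_expansion:
  assumes "f has_fps_expansion F"
  shows "fps_nth F 0 = f 0"
  using assms by (auto simp: has_fps_expansion_def eval_fps_at_0 dest: eventually_nhds_x_imp_x)

lemma has_fps_expansion_eventually_sums: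
  fixes F :: "'a :: {banach, real_normed_div_algebra} fps"
  assumes "f has_fps_expansion F"
  shows "\<forall>\<^sub>F x in nhds 0. (\<lambda>n. fps_nth F n * x ^ n) sums f x"
proof -
  have "\<forall>\<^sub>F x in nhds 0. x \<in> eball 0 (fps_conv_radius F)"
    using assms by (intro eventually_nhds_in_open) (auto simp: has_fps_expansion_def zero_ereal_def)
  moreover have "\<forall>\<^sub>F x in nhds 0. eval_fps F x = f x"
    using assms by (simp add: has_fps_expansion_def)
  ultimately show ?thesis
  proof eventually_elim
    case (elim x)
    then have "norm x < fps_conv_radius F" by (simp add: dist_0_norm)
    from sums_eval_fps[OF this] show ?case using elim(2) by simp
  qed
qed

lemma has_fps_expansion_eventually_nonzero:
  fixes F :: "'a :: {banach, real_normed_field} fps"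
  assumes "f has_fps_expansion F" and "f 0 \<noteq> 0"
  shows "\<forall>\<^sub>F x in nhds 0. f x \<noteq> 0"
  using has_fps_expansion_imp_continuous[OF assms(1), of UNIV] assms(2)
  by (simp add: isCont_def eventually_nhds_conv_at tendsto_imp_eventually_ne)

lemma fps_cramer:
  fixes A B C D E F :: "'a :: field fps"
  assumes "fps_nth (A * D - B * C) 0 \<noteq> 0"
  shows "A * ((E * D - B * F) / (A * D - B * C)) + B * ((A * F - C * E) / (A * D - B * C)) = E"
    and "C * ((E * D - B * F) / (A * D - B * C)) + D * ((A * F - C * E) / (A * D - B * C)) = F"
proof -
  let ?Det = "A * D - B * C"
  have combine: "P * (N / ?Det) + Q * (M / ?Det) = S" if "P * N + Q * M = S * ?Det" for P Q N M S
  proof -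
    have "P * (N / ?Det) + Q * (M / ?Det) = (P * N + Q * M) * inverse ?Det"
      unfolding fps_divide_unit[OF assms] by (simp add: algebra_simps)
    also have "\<dots> = S * (?Det * inverse ?Det)"
      unfolding that by (simp only: mult.assoc)
    also have "\<dots> = S"
      using assms by (simp add: inverse_mult_eq_1')
    finally show ?thesis .
  qed
  show "A * ((E * D - B * F) / ?Det) + B * ((A * F - C * E) / ?Det) = E"
    and "C * ((E * D - B * F) / ?Det) + D * ((A * F - C * E) / ?Det) = F"
    by (rule combine, simp add: algebra_simps)+
qed

lemma linear_system_fps_solution:
  fixes a b c d e f :: "'a :: {banach, real_normed_field} \<Rightarrow> 'a"
  assumes "a has_fps_expansion A" "b has_fps_expansion B"
    and "c has_fps_expansion C" "d has_fps_expansion D"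
    and "e has_fps_expansion E" "f has_fps_expansion F"
    and det0: "a 0 * d 0 - b 0 * c 0 \<noteq> 0"
  obtains Y Z where "A * Y + B * Z = E" "C * Y + D * Z = F"
    "fps_nth Z 0 = (a 0 * f 0 - c 0 * e 0) / (a 0 * d 0 - b 0 * c 0)"
    "\<forall>\<^sub>F x in nhds 0. \<forall>y z. a x * y + b x * z = e x \<longrightarrow> c x * y + d x * z = f x \<longrightarrow>
       (\<lambda>n. fps_nth Y n * x ^ n) sums y \<and> (\<lambda>n. fps_nth Z n * x ^ n) sums z"
proof
  define det where "det x = a x * d x - b x * c x" for x
  have detE: "det has_fps_expansion A * D - B * C"
    unfolding det_def using assms by (intro fps_expansion_intros)
  have Det0: "fps_nth (A * D - B * C) 0 \<noteq> 0"
    using fps_nth_0_has_fps_expansion[OF detE] det0 by (simp add: det_def)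
  have yE: "(\<lambda>x. (e x * d x - b x * f x) / det x) has_fps_expansion (E * D - B * F) / (A * D - B * C)"
    using assms detE Det0 by (intro fps_expansion_intros)
  have zE: "(\<lambda>x. (a x * f x - c x * e x) / det x) has_fps_expansion (A * F - C * E) / (A * D - B * C)"
    using assms detE Det0 by (intro fps_expansion_intros)
  show "A * ((E * D - B * F) / (A * D - B * C)) + B * ((A * F - C * E) / (A * D - B * C)) = E"
    "C * ((E * D - B * F) / (A * D - B * C)) + D * ((A * F - C * E) / (A * D - B * C)) = F"
    using fps_cramer[OF Det0] by blast+
  show "fps_nth ((A * F - C * E) / (A * D - B * C)) 0 = (a 0 * f 0 - c 0 * e 0) / (a 0 * d 0 - b 0 * c 0)"
    using fps_nth_0_has_fps_expansion[OF zE] by (simp add: det_def)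
  have "det 0 \<noteq> 0" using det0 by (simp add: det_def)
  with detE have "\<forall>\<^sub>F x in nhds 0. det x \<noteq> 0"
    by (rule has_fps_expansion_eventually_nonzero)
  with has_fps_expansion_eventually_sums[OF yE] has_fps_expansion_eventually_sums[OF zE]
  show "\<forall>\<^sub>F x in nhds 0. \<forall>y z. a x * y + b x * z = e x \<longrightarrow> c x * y + d x * z = f x \<longrightarrow>
      (\<lambda>n. fps_nth ((E * D - B * F) / (A * D - B * C)) n * x ^ n) sums y \<and>
      (\<lambda>n. fps_nth ((A * F - C * E) / (A * D - B * C)) n * x ^ n) sums z"
  proof eventually_elim
    case (elim x)
    show ?case
    proof (intro allI impI)
      fix y z assume e1: "a x * y + b x * z = e x" and e2: "c x * y + d x * z = f x"
      have "det x * y = d x * (a x * y + b x * z) - b x * (c x * y + d x * z)"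
        "det x * z = a x * (c x * y + d x * z) - c x * (a x * y + b x * z)"
        unfolding det_def by (simp_all add: algebra_simps)
      then have "y = (e x * d x - b x * f x) / det x" "z = (a x * f x - c x * e x) / det x"
        unfolding e1 e2 using elim(3) by (simp_all add: eq_divide_eq algebra_simps)
      with elim(1,2) show "(\<lambda>n. fps_nth ((E * D - B * F) / (A * D - B * C)) n * x ^ n) sums y \<and>
          (\<lambda>n. fps_nth ((A * F - C * E) / (A * D - B * C)) n * x ^ n) sums z"
        by simp
    qed
  qed
qed

lemma has_fps_expansion_sum_fractions:
  fixes w t :: "'b \<Rightarrow> 'a :: {banach, real_normed_field}"
  assumes "s \<noteq> 0"
  shows "\<exists>F. (\<lambda>x. \<Sum>k\<in>K. w k / (s - t k * x)) has_fps_expansion F"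
proof
  show "(\<lambda>x. \<Sum>k\<in>K. w k / (s - t k * x)) has_fps_expansion
      (\<Sum>k\<in>K. fps_const (w k) / (fps_const s - fps_const (t k) * fps_X))"
    using assms by (intro fps_expansion_intros) auto
qed

lemma sums_inverse_powers:
  fixes f :: "nat \<Rightarrow> real"
  assumes "(\<lambda>n. f n * (1/c)^n) sums s"
  shows "(\<lambda>i. f i / c^(i+1)) sums (s / c)"
    and "(\<lambda>i. f (i+1) / c^(i+1)) sums (s - f 0)"
proof -
  show "(\<lambda>i. f i / c^(i+1)) sums (s / c)"
    using sums_divide[OF assms, of c] by (simp add: power_one_over mult.commute)
  show "(\<lambda>i. f (i+1) / c^(i+1)) sums (s - f 0)"
    using sums_Suc_iff[of "\<lambda>n. f n * (1/c)^n" "s - f 0"] assms by (simp add: power_one_over)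
qed

lemma fps_coefficient_relations:
  fixes U V :: "real fps" and R m G :: real
  assumes R: "R > 0" and V0: "fps_nth V 0 = 0"
    and eq: "fps_const (R+1) * (fps_const (R+2) - fps_const (2*m) * fps_X) * U
      + (fps_const ((R+2)*m) * fps_X - fps_const (2*(R+1))) * V
      = fps_const (4*R*(R+1)*(R+2)*m) * (fps_const R + fps_const (G-1) * fps_X)"
  defines "u \<equiv> fps_nth (fps_X * U)" and "v \<equiv> fps_nth V"
  shows "u 1 = 4*R^2*m"
    and "(R+2)*u 2 - 2*m*u 1 - 2 * v 1 = 4*(R+2)*(G-1)*R*m"
    and "i \<ge> 1 \<Longrightarrow> (R+2)*u (i+2) - 2*m*u (i+1) - 2 * v (i+1) + (R+2)/(R+1)*m * v i = 0"
proof -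
  have coeff: "(R+1)*(R+2)*u (n+1) - 2*m*(R+1)*u n + (R+2)*m*(if n = 0 then 0 else v (n-1))
      - 2*(R+1) * v n = (if n = 0 then 4*R^2*(R+1)*(R+2)*m else if n = 1 then 4*R*(R+1)*(R+2)*m*(G-1) else 0)"
    for n
    using arg_cong[OF eq, of "\<lambda>F. fps_nth F n"] unfolding u_def v_def
    by (cases n) (auto simp: algebra_simps power2_eq_square)
  show "u 1 = 4*R^2*m"
    using coeff[of 0] R V0 by (simp add: u_def v_def)
  have "(R+1) * ((R+2)*u 2 - 2*m*u 1 - 2 * v 1) = (R+1) * (4*(R+2)*(G-1)*R*m)"
    using coeff[of 1] V0 by (simp add: v_def numeral_2_eq_2 algebra_simps)
  then show "(R+2)*u 2 - 2*m*u 1 - 2 * v 1 = 4*(R+2)*(G-1)*R*m"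
    using R by simp
  show "(R+2)*u (i+2) - 2*m*u (i+1) - 2 * v (i+1) + (R+2)/(R+1)*m * v i = 0" if "i \<ge> 1"
  proof -
    have "(R+1) * ((R+2)*u (i+2) - 2*m*u (i+1) - 2 * v (i+1) + (R+2)/(R+1)*m * v i) = 0"
      using coeff[of "i+1"] R that by (simp add: field_simps)
    then show ?thesis using R by simp
  qed
qed

section \<open>Eliminating the unknowns\<close>

lemma row_partial_fraction:
  fixes X Y Z a \<mu> R G c x :: real
  defines "E \<equiv> R + (G-1)*x"
  defines "s2 \<equiv> 4*R*(R+1)*(R+2)*E - (R+2)*Z*x + 2*(R+1)*Y"
    and "s3 \<equiv> -4*R*(R+1)*(R+2)^2*E + R^2*Z*x"
  assumes x: "x = 1 / c" and c: "c \<noteq> 0"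
    and row0: "X * c * R * (R+1) + Y * c * (R+1) - Z = 2*R*(R+1) * ((R-1)*R*c + 2*(1-G))"
    and row: "X * (R+2) * (c*(R+1) - \<mu>) + (c*(R+2) - \<mu>) * Y - Z + (c*(R+2) - 2*\<mu>) * a
      = 2*(R+2)*(R+1) * (R*(R-1)*c + 2*(1-G) - R*\<mu>)"
  shows "2*R*(R+1) * ((R+2) - 2*\<mu>*x) * a = s2 * ((R+2) - 2*\<mu>*x) + s3"
proof -
  have "c^2 * (2*R*(R+1) * ((R+2) - 2*\<mu>*x) * a - (s2 * ((R+2) - 2*\<mu>*x) + s3))
    = 2*R*(R+1)*c * ((X * (R+2) * (c*(R+1) - \<mu>) + (c*(R+2) - \<mu>) * Y - Z + (c*(R+2) - 2*\<mu>) * a)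
      - 2*(R+2)*(R+1) * (R*(R-1)*c + 2*(1-G) - R*\<mu>))
     - 2*(R+2)*((R+1)*c - \<mu>) * ((X * c * R * (R+1) + Y * c * (R+1) - Z) - 2*R*(R+1) * ((R-1)*R*c + 2*(1-G)))"
    unfolding x s2_def s3_def E_def using c by (simp add: field_simps power2_eq_square)
  then show ?thesis using row0 row c by simp
qed

lemma sum_weighted_partial_fractions:
  fixes a q w :: "'b \<Rightarrow> 'a :: field"
  assumes "\<And>k. k \<in> K \<Longrightarrow> C * q k * a k = s * q k + t" and "\<And>k. k \<in> K \<Longrightarrow> q k \<noteq> 0"
  shows "C * (\<Sum>k\<in>K. a k * w k) = s * (\<Sum>k\<in>K. w k) + t * (\<Sum>k\<in>K. w k / q k)"
proof -
  have Ca: "C * a k = s + t / q k" if "k \<in> K" for k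
    using assms[OF that] by (simp add: field_simps)
  have "C * (a k * w k) = s * w k + t * (w k / q k)" if "k \<in> K" for k
  proof -
    have "C * (a k * w k) = w k * (C * a k)" by (simp only: ac_simps)
    also have "\<dots> = s * w k + t * (w k / q k)" using Ca[OF that] by (simp add: algebra_simps)
    finally show ?thesis .
  qed
  then show ?thesis
    by (simp add: sum_distrib_left sum.distrib cong: sum.cong)
qed

lemma reduced_system_of_partial_fractions:
  fixes R \<rho> \<delta> m G x Y U Z \<phi> \<psi> :: real
  defines "E \<equiv> R + (G-1)*x"
  defines "s2 \<equiv> 4*R*(R+1)*(R+2)*E - (R+2)*Z*x + 2*(R+1)*Y"
    and "s3 \<equiv> -4*R*(R+1)*(R+2)^2*E + R^2*Z*x"
  assumes x: "x \<noteq> 0" and R\<rho>: "R \<noteq> \<rho>" and \<delta>: "\<delta> = - m * (R - \<rho>)" and Y: "Y = x * U"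
    and hY: "2*R*(R+1) * Y = s2 * \<rho> + s3 * \<phi>"
    and hZ: "2*R*(R+1) * Z = s2 * \<delta> + s3 * \<psi>"
    and h\<phi>: "(R+2) * \<phi> = \<rho> + 2*x*\<psi>"
  shows "2*(R+1)*(R-\<rho>) * U + ((R+2)*\<rho> - R^2*\<phi>) * Z = -8*R*(R+1)*(R+2)*E*\<psi>"
    and "(R+1)*((R+2) - 2*m*x) * U + ((R+2)*m*x - 2*(R+1)) * Z = 4*R*(R+1)*(R+2)*m*E"
proof -
  define DY where "DY = 2*R*(R+1) * Y - (s2 * \<rho> + s3 * \<phi>)"
  define DZ where "DZ = 2*R*(R+1) * Z - (s2 * \<delta> + s3 * \<psi>)"
  define D\<phi> where "D\<phi> = (R+2) * \<phi> - (\<rho> + 2*x*\<psi>)"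
  have "x * (2*(R+1)*(R-\<rho>) * U + ((R+2)*\<rho> - R^2*\<phi>) * Z - -8*R*(R+1)*(R+2)*E*\<psi>)
    = DY - 4*R*(R+1)*(R+2)*E * D\<phi>"
    unfolding DY_def D\<phi>_def s2_def s3_def Y by (simp add: algebra_simps power2_eq_square)
  then show "2*(R+1)*(R-\<rho>) * U + ((R+2)*\<rho> - R^2*\<phi>) * Z = -8*R*(R+1)*(R+2)*E*\<psi>"
    using hY h\<phi> x unfolding DY_def D\<phi>_def by simp
  \<comment> \<open>\<open>\<phi>\<close> cancels from this combination, which is why the second equation has polynomial coefficients.\<close>
  have "-2*(R-\<rho>)*x * ((R+1)*((R+2) - 2*m*x) * U + ((R+2)*m*x - 2*(R+1)) * Z - 4*R*(R+1)*(R+2)*m*E)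
    = 2*x*DZ - (R+2)*DY - s3*D\<phi>"
    unfolding DY_def DZ_def D\<phi>_def s2_def s3_def \<delta> Y by (simp add: algebra_simps power2_eq_square)
  then show "(R+1)*((R+2) - 2*m*x) * U + ((R+2)*m*x - 2*(R+1)) * Z = 4*R*(R+1)*(R+2)*m*E"
    using hY hZ h\<phi> x R\<rho> unfolding DY_def DZ_def D\<phi>_def by simp
qed

section \<open>The system for large \<open>c\<close>\<close>

locale rank_degree_data =
  fixes l :: nat and r :: "nat \<Rightarrow> nat" and d :: "nat \<Rightarrow> int" and g :: int
  assumes two_le_l: "2 \<le> l" and ranks_pos: "\<forall>k\<le>l. 1 \<le> r k" and degrees_sum: "(\<Sum>k\<le>l. d k) = 0"
begin

definition rv :: real where "rv = real (rV l r)"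
definition rho :: real where "rho = (\<Sum>k\<in>{2..l}. real (r k))"
definition m01 :: real where "m01 = real_of_int (d 0 + d 1) / real (r 0 + r 1)"
definition kappa :: real where "kappa = piR l r / fact (rV l r + 2)"

lemma dV_zero: "dV l d = 0"
  using degrees_sum by (simp add: dV_def)

lemma atMost_split: "{..l} = insert 0 (insert 1 {2..l})"
  using two_le_l by auto

lemma rv_eq: "rv = real (r 0 + r 1) + rho"
  unfolding rv_def rV_def rho_def atMost_split by simp

lemma rho_less_rv: "rho < rv"
  using rv_eq ranks_pos two_le_l by auto

lemma rv_pos: "0 < rv"
proof -
  have "0 \<le> rho" unfolding rho_def by (simp add: sum_nonneg)
  then show ?thesis using rho_less_rv by simp
qed

lemma sum_degrees_tail: "(\<Sum>k\<in>{2..l}. real_of_int (d k)) = - m01 * (rv - rho)"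
proof -
  have "d 0 + d 1 + (\<Sum>k\<in>{2..l}. d k) = 0"
    using degrees_sum unfolding atMost_split by (simp add: add.assoc)
  moreover have "real (r 0 + r 1) > 0" using ranks_pos two_le_l by auto
  ultimately show ?thesis
    unfolding m01_def rv_eq by (simp flip: of_int_sum add: eq_neg_iff_add_eq_0 add.commute)
qed

lemma rank_mult_mu: "k \<le> l \<Longrightarrow> real (r k) * mu r d k = real_of_int (d k)"
  using ranks_pos by (force simp: mu_def)

lemma kappa_pos: "0 < kappa"
  unfolding kappa_def piR_def by (simp add: prod_pos)

lemma fact_rV_Suc: "fact (rV l r + 1) = (rv+1) * fact (rV l r)"
  and fact_rV_Suc_Suc: "fact (rV l r + 2) = (rv+2) * (rv+1) * fact (rV l r)"
  and fact_rV: "fact (rV l r) = rv * fact (rV l r - 1)"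
proof -
  have "rV l r \<ge> 1" using rv_pos by (simp add: rv_def)
  then show "fact (rV l r) = rv * fact (rV l r - 1)"
    unfolding rv_def by (metis Suc_diff_1 fact_Suc less_le_trans of_nat_fact zero_less_one)
qed (simp_all add: rv_def algebra_simps numeral_2_eq_2)

lemma kappa_fact_Suc: "piR l r / fact (rV l r + 1) = kappa * (rv+2)"
  and kappa_fact: "piR l r / fact (rV l r) = kappa * (rv+2) * (rv+1)"
  and kappa_fact_pred: "piR l r / fact (rV l r - 1) = kappa * (rv+2) * (rv+1) * rv"
proof -
  have nz: "rv + 1 \<noteq> 0" "rv + 2 \<noteq> 0" "rv \<noteq> 0" "fact (rV l r) \<noteq> (0::real)"
    using rv_pos by auto
  then show "piR l r / fact (rV l r + 1) = kappa * (rv+2)"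
    "piR l r / fact (rV l r) = kappa * (rv+2) * (rv+1)"
    unfolding kappa_def fact_rV_Suc_Suc fact_rV_Suc by (simp_all add: divide_simps ac_simps)
  have "fact (rV l r - 1) = fact (rV l r) / rv" using nz fact_rV by simp
  with nz show "piR l r / fact (rV l r - 1) = kappa * (rv+2) * (rv+1) * rv"
    unfolding kappa_def fact_rV_Suc_Suc by (simp add: divide_simps ac_simps)
qed

lemma alpha0_eq: "alpha0 l r d c = kappa * (rv+2) * (rv+1) * (rv * c)"
  unfolding alpha0_def dV_zero kappa_fact by (simp add: rv_def)

lemma alpha1_eq: "j \<le> l \<Longrightarrow> alpha1 l r d c j = kappa * (rv+2) * (real (r j) * (rv+1) * c - d j)"
  unfolding alpha1_def dV_zero kappa_fact_Suc
  by (simp add: rank_mult_mu[symmetric] rv_def algebra_simps)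

lemma alpha2_eq:
  assumes "j \<le> l"
  shows "alpha2 l r d c j k = kappa * (real (r k) * (real (r j) * ((rv+2)*c - mu r d k) - d j
    + (if j = k then (rv+2)*c - 2 * mu r d k else 0)))"
  using rank_mult_mu[OF assms, symmetric] unfolding alpha2_def kappa_def[symmetric] dV_zero
  by (simp add: rv_def algebra_simps)

lemma beta0_eq: "beta0 l r d g c = kappa * (rv+2) * (rv+1) * rv * ((rv-1)*rv*c + 2*(1 - real_of_int g))"
  unfolding beta0_def dV_zero kappa_fact_pred by (simp add: rv_def)

lemma beta1_eq: "beta1 l r d g c k
  = kappa * (rv+2) * (rv+1) * (real (r k) * (rv*(rv-1)*c + 2*(1 - real_of_int g) - rv * mu r d k))"
proof -
  have "beta1 l r d g c k
    = piR l r / fact (rV l r) * (real (r k) * (rv*(rv-1)*c + 2*(1 - real_of_int g) - rv * mu r d k))"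
    unfolding beta1_def dV_zero by (simp add: rv_def)
  then show ?thesis unfolding kappa_fact .
qed

lemma solves_system_row0:
  assumes "solves_system l r d g c a"
  shows "a 0 * c * rv * (rv+1) + (\<Sum>j=2..l. a j * real (r j)) * c * (rv+1)
      - (\<Sum>j=2..l. a j * real_of_int (d j)) = 2*rv*(rv+1) * ((rv-1)*rv*c + 2*(1 - real_of_int g))"
    (is "?lhs = ?rhs")
proof -
  have "(\<Sum>j=2..l. a j * alpha1 l r d c j)
      = (\<Sum>j=2..l. kappa * (rv+2) * ((rv+1) * c * (a j * real (r j)) - a j * d j))"
    by (rule sum.cong) (simp_all add: alpha1_eq algebra_simps)
  also have "\<dots> = kappa * (rv+2) * ((rv+1) * c
      * (\<Sum>j=2..l. a j * real (r j)) - (\<Sum>j=2..l. a j * real_of_int (d j)))"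
    by (simp add: sum_subtractf flip: sum_distrib_left)
  finally have
    "(\<Sum>j=2..l. a j * alpha1 l r d c j) = kappa * (rv+2) * ((rv+1) * c
      * (\<Sum>j=2..l. a j * real (r j)) - (\<Sum>j=2..l. a j * real_of_int (d j)))" .
  then have "kappa * (rv+2) * ?lhs = kappa * (rv+2) * ?rhs"
    using assms unfolding solves_system_def alpha0_eq beta0_eq by (simp add: algebra_simps)
  then show ?thesis
    using kappa_pos rv_pos by simp
qed

lemma solves_system_row:
  assumes "solves_system l r d g c a" and k: "k \<in> {2..l}"
  shows "a 0 * (rv+2) * (c*(rv+1) - mu r d k) + (c*(rv+2) - mu r d k) * (\<Sum>j=2..l. a j * real (r j))
      - (\<Sum>j=2..l. a j * real_of_int (d j)) + (c*(rv+2) - 2 * mu r d k) * a k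
    = 2*(rv+2)*(rv+1) * (rv*(rv-1)*c + 2*(1 - real_of_int g) - rv * mu r d k)"
    (is "?lhs = ?rhs")
proof -
  have "(\<Sum>j=2..l. a j * alpha2 l r d c j k) = (\<Sum>j=2..l. kappa * real (r k)
      * (((rv+2)*c - mu r d k) * (a j * real (r j)) - a j * d j
        + (if j = k then ((rv+2)*c - 2 * mu r d k) * a k else 0)))"
    by (rule sum.cong) (simp_all add: alpha2_eq algebra_simps)
  also have "\<dots> = kappa * real (r k) * (((rv+2)*c - mu r d k)
      * (\<Sum>j=2..l. a j * real (r j)) - (\<Sum>j=2..l. a j * real_of_int (d j))
      + ((rv+2)*c - 2 * mu r d k) * a k)"
    using k by (simp add: sum.distrib sum_subtractf sum.delta flip: sum_distrib_left)
  finally have alpha2_sum: "(\<Sum>j=2..l. a j * alpha2 l r d c j k) = kappa * real (r k) * (((rv+2)*c - mu r d k)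
      * (\<Sum>j=2..l. a j * real (r j)) - (\<Sum>j=2..l. a j * real_of_int (d j))
      + ((rv+2)*c - 2 * mu r d k) * a k)" .
  have alpha1_k: "alpha1 l r d c k = kappa * real (r k) * (rv+2) * ((rv+1)*c - mu r d k)"
    using k by (simp add: alpha1_eq rank_mult_mu[symmetric] algebra_simps)
  have "kappa * real (r k) * ?lhs
      = a 0 * alpha1 l r d c k + (\<Sum>j=2..l. a j * alpha2 l r d c j k)"
    unfolding alpha1_k alpha2_sum by (simp add: algebra_simps)
  also have "\<dots> = 2 * beta1 l r d g c k"
    using assms unfolding solves_system_def by blast
  also have "\<dots> = kappa * real (r k) * ?rhs"
    unfolding beta1_eq by (simp add: algebra_simps)
  finally have "kappa * real (r k) * ?lhs = kappa * real (r k) * ?rhs" .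
  moreover have "kappa \<noteq> 0" "r k \<noteq> 0"
    using kappa_pos ranks_pos k by force+
  ultimately show ?thesis by simp
qed

definition phi :: "real \<Rightarrow> real" where
  "phi x = (\<Sum>k\<in>{2..l}. real (r k) / ((rv+2) - 2 * mu r d k * x))"

definition psi :: "real \<Rightarrow> real" where
  "psi x = (\<Sum>k\<in>{2..l}. real_of_int (d k) / ((rv+2) - 2 * mu r d k * x))"

definition reduced_system :: "real \<Rightarrow> real \<Rightarrow> real \<Rightarrow> bool" where
  "reduced_system x U Z \<longleftrightarrow>
     2*(rv+1)*(rv-rho) * U + ((rv+2)*rho - rv^2 * phi x) * Z
       = -8*rv*(rv+1)*(rv+2)*(rv + (real_of_int g - 1)*x) * psi x \<and>
     (rv+1)*((rv+2) - 2*m01*x) * U + ((rv+2)*m01*x - 2*(rv+1)) * Z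
       = 4*rv*(rv+1)*(rv+2)*m01*(rv + (real_of_int g - 1)*x)"

lemma phi_psi_relation:
  assumes "\<And>k. k \<in> {2..l} \<Longrightarrow> (rv+2) - 2 * mu r d k * x \<noteq> 0"
  shows "(rv+2) * phi x = rho + 2*x * psi x"
proof -
  have "(rv+2) * phi x = (\<Sum>k\<in>{2..l}. real (r k) + 2*x * (real_of_int (d k) / ((rv+2) - 2 * mu r d k * x)))"
    unfolding phi_def sum_distrib_left
  proof (rule sum.cong)
    fix k assume k: "k \<in> {2..l}"
    then show "(rv+2) * (real (r k) / ((rv+2) - 2 * mu r d k * x))
      = real (r k) + 2*x * (real_of_int (d k) / ((rv+2) - 2 * mu r d k * x))"
      using assms[OF k] by (simp add: rank_mult_mu[symmetric] field_simps)
  qed simp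
  also have "\<dots> = rho + 2*x * psi x"
    by (simp add: rho_def psi_def sum.distrib sum_distrib_left)
  finally show ?thesis .
qed

lemma solves_system_imp_reduced_system:
  assumes sol: "solves_system l r d g c a" and c: "0 < c" and mu_less: "\<forall>k\<in>{2..l}. mu r d k < c"
  shows "reduced_system (1/c) (c * (\<Sum>j=2..l. a j * real (r j))) (\<Sum>j=2..l. a j * real_of_int (d j))"
proof -
  define x where "x = 1/c"
  define Y where "Y = (\<Sum>j=2..l. a j * real (r j))"
  define Z where "Z = (\<Sum>j=2..l. a j * real_of_int (d j))"
  define q where "q k = (rv+2) - 2 * mu r d k * x" for k
  define E where "E = rv + (real_of_int g - 1)*x"
  define s2 where "s2 = 4*rv*(rv+1)*(rv+2)*E - (rv+2)*Z*x + 2*(rv+1)*Y"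
  define s3 where "s3 = -4*rv*(rv+1)*(rv+2)^2*E + rv^2*Z*x"
  have q: "q k \<noteq> 0" if "k \<in> {2..l}" for k
  proof -
    have "mu r d k * x < 1" using mu_less that c by (simp add: x_def)
    then show ?thesis using rv_pos by (simp add: q_def)
  qed
  have c0: "c \<noteq> 0" using c by simp
  have "2*rv*(rv+1) * q k * a k = s2 * q k + s3" if "k \<in> {2..l}" for k
    using row_partial_fraction[OF x_def c0 solves_system_row0[OF sol] solves_system_row[OF sol that]]
    unfolding q_def s2_def s3_def E_def Y_def Z_def .
  from sum_weighted_partial_fractions[OF this q]
  have "2*rv*(rv+1) * (\<Sum>k\<in>{2..l}. a k * w k) = s2 * (\<Sum>k\<in>{2..l}. w k) + s3 * (\<Sum>k\<in>{2..l}. w k / q k)"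
    for w :: "nat \<Rightarrow> real" .
  from this[of "\<lambda>k. real (r k)"] this[of "\<lambda>k. real_of_int (d k)"]
  have hY: "2*rv*(rv+1) * Y = s2 * rho + s3 * phi x"
    and hZ: "2*rv*(rv+1) * Z = s2 * (- m01 * (rv - rho)) + s3 * psi x"
    unfolding Y_def Z_def rho_def phi_def psi_def q_def sum_degrees_tail by simp_all
  have h\<phi>: "(rv+2) * phi x = rho + 2*x * psi x"
    using q by (intro phi_psi_relation) (simp add: q_def)
  have "x \<noteq> 0" "rv \<noteq> rho" "Y = x * (c * Y)"
    using c rho_less_rv by (simp_all add: x_def)
  from reduced_system_of_partial_fractions[OF this(1,2) refl this(3) hY[unfolded s2_def s3_def E_def]
      hZ[unfolded s2_def s3_def E_def] h\<phi>]
  show ?thesis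
    unfolding reduced_system_def x_def[symmetric] Y_def[symmetric] Z_def[symmetric] by blast
qed

lemma phi_0: "phi 0 = rho / (rv+2)"
  unfolding phi_def rho_def by (simp add: sum_divide_distrib)

lemma psi_0: "psi 0 = - m01 * (rv - rho) / (rv+2)"
  unfolding psi_def by (simp add: sum_divide_distrib[symmetric] sum_degrees_tail)

lemma reduced_system_fps_solution:
  obtains U V :: "real fps" where "fps_nth V 0 = 0"
    and "fps_const (rv+1) * (fps_const (rv+2) - fps_const (2*m01) * fps_X) * U
      + (fps_const ((rv+2)*m01) * fps_X - fps_const (2*(rv+1))) * V
      = fps_const (4*rv*(rv+1)*(rv+2)*m01) * (fps_const rv + fps_const (real_of_int g - 1) * fps_X)"
    and "\<forall>\<^sub>F x in nhds 0. \<forall>y z. reduced_system x y z \<longrightarrow>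
      (\<lambda>n. fps_nth U n * x^n) sums y \<and> (\<lambda>n. fps_nth V n * x^n) sums z"
proof -
  define a1 b1 e1 a2 b2 e2 :: "real \<Rightarrow> real"
    where "a1 = (\<lambda>_. 2*(rv+1)*(rv-rho))" and "b1 = (\<lambda>x. (rv+2)*rho - rv^2 * phi x)"
      and "e1 = (\<lambda>x. -8*rv*(rv+1)*(rv+2)*(rv + (real_of_int g - 1)*x) * psi x)"
      and "a2 = (\<lambda>x. (rv+1)*((rv+2) - 2*m01*x))" and "b2 = (\<lambda>x. (rv+2)*m01*x - 2*(rv+1))"
      and "e2 = (\<lambda>x. 4*rv*(rv+1)*(rv+2)*m01*(rv + (real_of_int g - 1)*x))"
  define A2 B2 E2 :: "real fps"
    where "A2 = fps_const (rv+1) * (fps_const (rv+2) - fps_const (2*m01) * fps_X)"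
      and "B2 = fps_const ((rv+2)*m01) * fps_X - fps_const (2*(rv+1))"
      and "E2 = fps_const (4*rv*(rv+1)*(rv+2)*m01) * (fps_const rv + fps_const (real_of_int g - 1) * fps_X)"
  have rv2: "rv + 2 \<noteq> 0" using rv_pos by simp
  obtain \<Phi> \<Psi> where \<Phi>: "phi has_fps_expansion \<Phi>" and \<Psi>: "psi has_fps_expansion \<Psi>"
    using has_fps_expansion_sum_fractions[OF rv2, where K = "{2..l}" and t = "\<lambda>k. 2 * mu r d k"]
    unfolding phi_def[abs_def] psi_def[abs_def] by meson
  have e1: "e1 has_fps_expansion
      fps_const (-8*rv*(rv+1)*(rv+2)) * (fps_const rv + fps_const (real_of_int g - 1) * fps_X) * \<Psi>"
    using \<Psi> unfolding e1_def by (intro fps_expansion_intros)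
  have a1: "a1 has_fps_expansion fps_const (2*(rv+1)*(rv-rho))"
    and b1: "b1 has_fps_expansion fps_const ((rv+2)*rho) - fps_const (rv^2) * \<Phi>"
    and a2: "a2 has_fps_expansion A2" and b2: "b2 has_fps_expansion B2" and e2: "e2 has_fps_expansion E2"
    using \<Phi> unfolding a1_def b1_def a2_def b2_def e2_def A2_def B2_def E2_def
    by (auto intro!: fps_expansion_intros)
  have det: "a1 0 * b2 0 - b1 0 * a2 0 = -4*rv*(rv+1)^2"
    using rv_pos by (simp add: a1_def b1_def a2_def b2_def phi_0 field_simps power2_eq_square)
  obtain U V where "fps_const (2*(rv+1)*(rv-rho)) * U + (fps_const ((rv+2)*rho) - fps_const (rv^2) * \<Phi>) * V
      = fps_const (-8*rv*(rv+1)*(rv+2)) * (fps_const rv + fps_const (real_of_int g - 1) * fps_X) * \<Psi>"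
    and fps_eq: "A2 * U + B2 * V = E2"
    and V0: "fps_nth V 0 = (a1 0 * e2 0 - a2 0 * e1 0) / (a1 0 * b2 0 - b1 0 * a2 0)"
    and near0: "\<forall>\<^sub>F x in nhds 0. \<forall>y z. a1 x * y + b1 x * z = e1 x \<longrightarrow> a2 x * y + b2 x * z = e2 x \<longrightarrow>
      (\<lambda>n. fps_nth U n * x^n) sums y \<and> (\<lambda>n. fps_nth V n * x^n) sums z"
    using linear_system_fps_solution[OF a1 b1 a2 b2 e1 e2] det rv_pos by auto
  show ?thesis
  proof (rule that[OF _ fps_eq[unfolded A2_def B2_def E2_def]])
    have "a1 0 * e2 0 - a2 0 * e1 0 = 0"
      using rv2 by (simp add: a1_def a2_def e1_def e2_def psi_0)
    then show "fps_nth V 0 = 0"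
      unfolding V0 by simp
    show "\<forall>\<^sub>F x in nhds 0. \<forall>y z. reduced_system x y z \<longrightarrow>
        (\<lambda>n. fps_nth U n * x^n) sums y \<and> (\<lambda>n. fps_nth V n * x^n) sums z"
      using near0 by (auto simp: reduced_system_def a1_def b1_def e1_def a2_def b2_def e2_def elim!: eventually_mono)
  qed
qed

lemma solves_system_eventually_sums:
  fixes a :: "real \<Rightarrow> nat \<Rightarrow> real" and U V :: "real fps"
  assumes sol: "\<forall>c. (\<forall>k\<le>l. mu r d k < c) \<longrightarrow> solves_system l r d g c (a c)"
    and near0: "\<forall>\<^sub>F x in nhds 0. \<forall>y z. reduced_system x y z \<longrightarrow>
      (\<lambda>n. fps_nth U n * x^n) sums y \<and> (\<lambda>n. fps_nth V n * x^n) sums z"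
    and V0: "fps_nth V 0 = 0"
  shows "\<forall>\<^sub>F c in at_top.
    (\<lambda>i. fps_nth (fps_X * U) (i + 1) / c ^ (i + 1)) sums (\<Sum>j=2..l. a c j * real (r j)) \<and>
    (\<lambda>i. fps_nth V (i + 1) / c ^ (i + 1)) sums (\<Sum>j=2..l. a c j * real_of_int (d j))"
proof -
  have "((\<lambda>c::real. 1/c) \<longlongrightarrow> 0) at_top"
    using tendsto_inverse_0_at_top[OF filterlim_ident] by (simp add: inverse_eq_divide)
  then have "\<forall>\<^sub>F c in at_top. \<forall>y z. reduced_system (1/c) y z \<longrightarrow>
      (\<lambda>n. fps_nth U n * (1/c)^n) sums y \<and> (\<lambda>n. fps_nth V n * (1/c)^n) sums z"
    by (rule eventually_compose_filterlim[OF near0])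
  moreover have "\<forall>\<^sub>F c in at_top. \<forall>k\<in>{..l}. mu r d k < c"
    by (intro eventually_ball_finite) (auto intro: eventually_gt_at_top)
  ultimately show ?thesis
    using eventually_gt_at_top[of 0]
  proof eventually_elim
    case (elim c)
    then have "reduced_system (1/c) (c * (\<Sum>j=2..l. a c j * real (r j))) (\<Sum>j=2..l. a c j * real_of_int (d j))"
      using sol by (intro solves_system_imp_reduced_system) auto
    with elim(1) have "(\<lambda>n. fps_nth U n * (1/c)^n) sums (c * (\<Sum>j=2..l. a c j * real (r j)))"
      and "(\<lambda>n. fps_nth V n * (1/c)^n) sums (\<Sum>j=2..l. a c j * real_of_int (d j))"
      by blast+
    from sums_inverse_powers(1)[OF this(1)] sums_inverse_powers(2)[OF this(2)]
    show ?case using elim(3) V0 by simp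
  qed
qed

lemma expansion_coefficients:
  fixes a :: "real \<Rightarrow> nat \<Rightarrow> real"
  assumes "\<forall>c. (\<forall>k\<le>l. mu r d k < c) \<longrightarrow> solves_system l r d g c (a c)"
  shows "\<exists>u v :: nat \<Rightarrow> real.
     (\<forall>\<^sub>F c in at_top.
        (\<lambda>i. u (i + 1) / c ^ (i + 1)) sums (\<Sum>j=2..l. a c j * real (r j)) \<and>
        (\<lambda>i. v (i + 1) / c ^ (i + 1)) sums (\<Sum>j=2..l. a c j * real_of_int (d j))) \<and>
     u 1 = 4 * rv^2 * m01 \<and>
     (rv+2) * u 2 - 2 * m01 * u 1 - 2 * v 1 = 4 * (rv+2) * (real_of_int g - 1) * rv * m01 \<and>
     (\<forall>i\<ge>1. (rv+2) * u (i+2) - 2 * m01 * u (i+1) - 2 * v (i+1) + (rv+2) / (rv+1) * m01 * v i = 0)"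
proof -
  obtain U V where V0: "fps_nth V 0 = 0"
    and fps_eq: "fps_const (rv+1) * (fps_const (rv+2) - fps_const (2*m01) * fps_X) * U
      + (fps_const ((rv+2)*m01) * fps_X - fps_const (2*(rv+1))) * V
      = fps_const (4*rv*(rv+1)*(rv+2)*m01) * (fps_const rv + fps_const (real_of_int g - 1) * fps_X)"
    and near0: "\<forall>\<^sub>F x in nhds 0. \<forall>y z. reduced_system x y z \<longrightarrow>
      (\<lambda>n. fps_nth U n * x^n) sums y \<and> (\<lambda>n. fps_nth V n * x^n) sums z"
    by (rule reduced_system_fps_solution)
  show ?thesis
    using solves_system_eventually_sums[OF assms near0 V0] fps_coefficient_relations[OF rv_pos V0 fps_eq]
    by blast
qed

end

theorem lemma3p17:
  fixes l :: nat and r :: "nat \<Rightarrow> nat" and d :: "nat \<Rightarrow> int" and g :: int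
    and a :: "real \<Rightarrow> nat \<Rightarrow> real"
  assumes hl: "l \<ge> 2"
    and hr: "\<forall>k\<le>l. r k \<ge> 1"
    and hdV: "(\<Sum>k\<le>l. d k) = 0"
    and hg: "g \<ge> 1"
    and hsol: "\<forall>c::real. (\<forall>k\<le>l. mu r d k < c) \<longrightarrow> solves_system l r d g c (a c)"
  shows "\<exists>u v :: nat \<Rightarrow> real.
     (\<forall>\<^sub>F c in at_top.
        (\<lambda>i. u (i + 1) / c ^ (i + 1)) sums (\<Sum>j=2..l. a c j * real (r j)) \<and>
        (\<lambda>i. v (i + 1) / c ^ (i + 1)) sums (\<Sum>j=2..l. a c j * real_of_int (d j))) \<and>
     (let rv = real (rV l r);
          m01 = real_of_int (d 0 + d 1) / real (r 0 + r 1) in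
       u 1 = 4 * rv ^ 2 * m01 \<and>
       (rv + 2) * u 2 - 2 * m01 * u 1 - 2 * v 1
          = 4 * (rv + 2) * (real_of_int g - 1) * rv * m01 \<and>
       (\<forall>i\<ge>1. (rv + 2) * u (i + 2) - 2 * m01 * u (i + 1) - 2 * v (i + 1)
                 + (rv + 2) / (rv + 1) * m01 * v i = 0))"
proof -
  interpret rank_degree_data l r d g
    using hl hr hdV by unfold_locales auto
  show ?thesis
    using expansion_coefficients[OF hsol, unfolded rv_def m01_def] unfolding Let_def by blast
qed

end
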